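(* For $\mu\in[-\pi,\pi)$ and $\rho\in[0,1)$, let $\operatorname{WC}(\mu,\rho)$ denote the wrapped Cauchy distribution on $[-\pi,\pi)$ with density $\frac{1}{2\pi}\frac{1-\rho^2}{1+\rho^2-2\rho\cos(\theta-\mu)}$. Suppose $\Theta\mid\nu\sim\operatorname{WC}(\nu,\rho_1)$ with known $\rho_1\in[0,1)$, and the prior distribution of $\nu$ is $\operatorname{WC}(\mu_2,\rho_2)$ with $\mu_2\in[-\pi,\pi)$, $\rho_2\in[0,1)$. Then for $\mu_1\in[-\pi,\pi)$, the posterior distribution of $\nu$ given $\Theta=\mu_1$ has density $$f(\nu)=C\left[\{1+\rho_1^2-2\rho_1\cos(\nu-\mu_1)\}\{1+\rho_2^2-2\rho_2\cos(\nu-\mu_2)\}\right]^{-1},\qquad -\pi\le\nu<\pi,$$ where $C=\dfrac{(1-\rho_1^2)(1-\rho_2^2)\{1+\rho_1^2\rho_2^2-2\rho_1\rho_2\cos(\mu_1-\mu_2)\}}{2\pi(1-\rho_1^2\rho_2^2)}$. *)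

theory Defs
  imports "HOL-Analysis.Analysis"
begin

definition wc_density :: "real \<Rightarrow> real \<Rightarrow> real \<Rightarrow> real" where
  "wc_density mu rho theta =
     (1 / (2 * pi)) * ((1 - rho\<^sup>2) / (1 + rho\<^sup>2 - 2 * rho * cos (theta - mu)))"

definition posterior_density :: "real \<Rightarrow> real \<Rightarrow> real \<Rightarrow> real \<Rightarrow> real \<Rightarrow> real" where
  "posterior_density rho1 mu2 rho2 theta nu =
     wc_density nu rho1 theta * wc_density mu2 rho2 nu /
     integral {-pi..pi} (\<lambda>nu'. wc_density nu' rho1 theta * wc_density mu2 rho2 nu')"

end

theory Submission
  imports Defs "HOL-Complex_Analysis.Cauchy_Integral_Formula"
begin

text \<open>The real part of the Herglotz kernel \<open>(1 + q z) / (1 - q z)\<close> on the unit circle is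
  the Poisson kernel, which is the wrapped Cauchy density up to the factor \<open>2\<pi>\<close>. Writing both
  likelihood and prior this way, their product is the real part of a function holomorphic on the
  closed disc plus a Cauchy integrand with a pole at \<open>\<rho>\<^sub>2 exp (i \<mu>\<^sub>2)\<close>, because the
  conjugate of a Herglotz kernel on the circle is again rational in \<open>z\<close>. Cauchy's integral
  formula then shows that the marginal density of \<open>\<Theta>\<close> is \<open>WC(\<mu>\<^sub>2, \<rho>\<^sub>1\<rho>\<^sub>2)\<close>, and the posterior
  follows from Bayes' formula by algebra.\<close>

definition poisson_kernel :: "real \<Rightarrow> real \<Rightarrow> real" where
  "poisson_kernel r a = (1 - r\<^sup>2) / (1 + r\<^sup>2 - 2 * r * cos a)"

definition herglotz_kernel :: "complex \<Rightarrow> complex \<Rightarrow> complex" where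
  "herglotz_kernel q z = (1 + q * z) / (1 - q * z)"

lemma wc_density_eq_poisson_kernel:
  "wc_density mu rho theta = poisson_kernel rho (theta - mu) / (2 * pi)"
  by (simp add: wc_density_def poisson_kernel_def)

lemma poisson_kernel_denominator_pos:
  fixes r a :: real
  assumes "0 \<le> r" "r < 1"
  shows "1 + r\<^sup>2 - 2 * r * cos a > 0"
proof -
  have "r * cos a \<le> r" using assms by (simp add: mult_left_le)
  hence "1 + r\<^sup>2 - 2 * r * cos a \<ge> (1 - r)\<^sup>2" by (simp add: power2_eq_square algebra_simps)
  moreover have "(1 - r)\<^sup>2 > 0" using assms by simp
  ultimately show ?thesis by linarith
qed

lemma poisson_kernel_even: "poisson_kernel r (- a) = poisson_kernel r a"
  by (simp add: poisson_kernel_def)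

lemma Re_herglotz_kernel_cis: "Re (herglotz_kernel (of_real r) (cis a)) = poisson_kernel r a"
proof -
  have "(1 - r * cos a)\<^sup>2 + (r * sin a)\<^sup>2 = 1 + r\<^sup>2 - 2 * r * cos a"
    using sin_cos_squared_add[of a] by algebra
  moreover have "(1 + r * cos a) * (1 - r * cos a) - (r * sin a)\<^sup>2 = 1 - r\<^sup>2"
    using sin_cos_squared_add[of a] by algebra
  ultimately show ?thesis
    by (simp add: herglotz_kernel_def poisson_kernel_def Re_divide cmod_power2 power2_eq_square)
qed

lemma herglotz_kernel_holomorphic:
  assumes "norm q < 1"
  shows "herglotz_kernel q holomorphic_on cball 0 1"
proof -
  have "q * z \<noteq> 1" if "z \<in> cball 0 1" for z
  proof
    assume "q * z = 1"
    hence "norm q * norm z = 1" by (metis norm_mult norm_one)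
    moreover have "norm q * norm z \<le> norm q" using that mult_left_le[of "norm z" "norm q"] by simp
    ultimately show False using assms by simp
  qed
  thus ?thesis unfolding herglotz_kernel_def by (auto intro!: holomorphic_intros)
qed

text \<open>On the unit circle \<open>cnj z = 1 / z\<close>, so conjugation keeps the kernel rational in \<open>z\<close>.\<close>

lemma cnj_herglotz_kernel_on_circle:
  assumes "norm z = 1" and "z \<noteq> cnj q"
  shows "cnj (herglotz_kernel q z) = 2 * z / (z - cnj q) - 1"
proof -
  have z0: "z \<noteq> 0" using assms(1) by auto
  have "cnj z = 1 / z"
    using z0 assms(1) complex_norm_square[of z] by (simp add: field_simps)
  hence "cnj (herglotz_kernel q z) = (1 + cnj q / z) / (1 - cnj q / z)"
    by (simp add: herglotz_kernel_def)
  also have "\<dots> = 2 * z / (z - cnj q) - 1"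
    using z0 assms(2) by (simp add: field_simps)
  finally show ?thesis .
qed

lemma Cauchy_integral_formula_unit_circle:
  fixes f :: "complex \<Rightarrow> complex"
  assumes holf: "f holomorphic_on cball 0 1" and w: "norm w < 1"
  shows "((\<lambda>t. f (cis t) * cis t / (cis t - w)) has_integral (2 * pi * f w)) {-pi..pi}"
proof -
  text \<open>The circle path starts at \<open>1\<close>; reflecting \<open>f\<close> lets \<open>cis (t - \<pi>) = - cis t\<close> move
    the parameter interval from \<open>[0, 2\<pi>]\<close> to \<open>[-\<pi>, \<pi>]\<close>.\<close>
  have "(\<lambda>u. f (- u)) holomorphic_on cball 0 1"
    using holf by (auto intro!: holomorphic_on_compose_gen[where g=f and f=uminus, unfolded o_def]
        holomorphic_intros)
  hence "((\<lambda>u. f (- u) / (u - (- w))) has_contour_integral (2 * of_real pi * \<i> * f (- (- w))))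
      (circlepath 0 1)"
    by (rule Cauchy_integral_circlepath_simple) (use w in simp)
  hence "((\<lambda>t. f (- cis t) / (cis t + w) * \<i> * cis t) has_integral (2 * pi * \<i> * f w)) {0..2*pi}"
    unfolding circlepath_def by (subst (asm) has_contour_integral_part_circlepath_iff) auto
  hence "((\<lambda>t. f (- cis t) / (cis t + w) * \<i> * cis t / \<i>) has_integral (2 * pi * \<i> * f w / \<i>))
      {0..2*pi}"
    by (rule has_integral_divide)
  moreover have "2 * pi * \<i> * f w / \<i> = 2 * pi * f w" by simp
  moreover have "f (- cis t) / (cis t + w) * \<i> * cis t / \<i>
      = f (cis (t - pi)) * cis (t - pi) / (cis (t - pi) - w)" for t
  proof -
    have "cis (t - pi) = - cis t" by (simp add: complex_eq_iff)
    moreover have nonzero: "cis t + w \<noteq> 0"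
      using w by (metis add_eq_0_iff norm_cis norm_minus_cancel order.irrefl)
    moreover have "- cis t - w \<noteq> 0"
      using nonzero by (metis minus_add_distrib diff_conv_add_uminus neg_equal_0_iff_equal)
    ultimately show ?thesis by (simp add: field_simps)
  qed
  ultimately have "((\<lambda>t. f (cis (t - pi)) * cis (t - pi) / (cis (t - pi) - w))
      has_integral (2 * pi * f w)) {0..2*pi}"
    by (simp only:)
  hence "((\<lambda>t. f (cis t) * cis t / (cis t - w)) has_integral (2 * pi * f w)) (cbox (0 + - pi) (2*pi + - pi))"
    by (intro has_integral_shift_cbox_iff[THEN iffD1]) (simp add: o_def)
  thus ?thesis by simp
qed

lemma mean_value_unit_circle:
  fixes f :: "complex \<Rightarrow> complex"
  assumes "f holomorphic_on cball 0 1"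
  shows "((\<lambda>t. f (cis t)) has_integral (2 * pi * f 0)) {-pi..pi}"
  using Cauchy_integral_formula_unit_circle[OF assms, of 0] by simp

lemma poisson_kernel_convolution:
  fixes r1 r2 m1 m2 :: real
  assumes "0 \<le> r1" "r1 < 1" and "0 \<le> r2" "r2 < 1"
  shows "((\<lambda>t. poisson_kernel r1 (t - m1) * poisson_kernel r2 (t - m2))
    has_integral (2 * pi * poisson_kernel (r1 * r2) (m2 - m1))) {-pi..pi}"
proof -
  define F1 where "F1 = herglotz_kernel (of_real r1 * cis (- m1))"
  define F2 where "F2 = herglotz_kernel (of_real r2 * cis (- m2))"
  define p where "p = of_real r2 * cis m2"
  have p: "norm p < 1" using assms by (simp add: p_def norm_mult)
  have hol1: "F1 holomorphic_on cball 0 1"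
    unfolding F1_def using assms by (intro herglotz_kernel_holomorphic) (simp add: norm_mult)
  have hol2: "F2 holomorphic_on cball 0 1"
    unfolding F2_def using assms by (intro herglotz_kernel_holomorphic) (simp add: norm_mult)
  have shift: "herglotz_kernel (of_real r * cis (- m)) (cis t) = herglotz_kernel (of_real r) (cis (t - m))"
    for r m t
  proof -
    have "of_real r * cis (- m) * cis t = of_real r * cis (t - m)"
      by (simp add: mult.assoc cis_mult)
    thus ?thesis by (simp only: herglotz_kernel_def)
  qed
  have integrand: "poisson_kernel r1 (t - m1) * poisson_kernel r2 (t - m2)
      = Re ((F1 (cis t) * F2 (cis t) + 2 * (F1 (cis t) * cis t / (cis t - p)) - F1 (cis t)) / 2)"
    for t
  proof -
    have "cis t \<noteq> p" using p by auto
    hence cnj_F2: "cnj (F2 (cis t)) = 2 * cis t / (cis t - p) - 1"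
      unfolding F2_def p_def by (subst cnj_herglotz_kernel_on_circle) (auto simp: cis_cnj)
    have "Re (F1 (cis t)) * Re (F2 (cis t))
        = Re ((F1 (cis t) * F2 (cis t) + F1 (cis t) * cnj (F2 (cis t))) / 2)"
      by (simp add: algebra_simps)
    also have "\<dots> = Re ((F1 (cis t) * F2 (cis t) + 2 * (F1 (cis t) * cis t / (cis t - p)) - F1 (cis t)) / 2)"
      unfolding cnj_F2 by (simp add: right_diff_distrib mult_ac)
    finally have "Re (F1 (cis t)) * Re (F2 (cis t))
        = Re ((F1 (cis t) * F2 (cis t) + 2 * (F1 (cis t) * cis t / (cis t - p)) - F1 (cis t)) / 2)" .
    thus ?thesis by (simp add: F1_def F2_def shift Re_herglotz_kernel_cis)
  qed
  have "((\<lambda>t. (F1 (cis t) * F2 (cis t) + 2 * (F1 (cis t) * cis t / (cis t - p)) - F1 (cis t)) / 2)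
      has_integral ((2 * pi * (F1 0 * F2 0) + 2 * (2 * pi * F1 p) - 2 * pi * F1 0) / 2)) {-pi..pi}"
    using hol1 hol2
    by (intro has_integral_divide has_integral_diff has_integral_add has_integral_mult_right
        mean_value_unit_circle Cauchy_integral_formula_unit_circle p holomorphic_intros)
  moreover have "(2 * pi * (F1 0 * F2 0) + 2 * (2 * pi * F1 p) - 2 * pi * F1 0) / 2
      = 2 * pi * herglotz_kernel (of_real (r1 * r2)) (cis (m2 - m1))"
  proof -
    have cis_diff: "cis (- m1) * cis m2 = cis (m2 - m1)" by (simp add: cis_mult)
    have "F1 p = herglotz_kernel (of_real (r1 * r2)) (cis (m2 - m1))"
      by (simp add: F1_def p_def herglotz_kernel_def mult_ac flip: cis_diff)
    moreover have "F1 0 = 1" "F2 0 = 1" by (simp_all add: F1_def F2_def herglotz_kernel_def)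
    ultimately show ?thesis by simp
  qed
  ultimately have complex_integral:
    "((\<lambda>t. (F1 (cis t) * F2 (cis t) + 2 * (F1 (cis t) * cis t / (cis t - p)) - F1 (cis t)) / 2)
      has_integral (2 * pi * herglotz_kernel (of_real (r1 * r2)) (cis (m2 - m1)))) {-pi..pi}"
    by (simp only:)
  have "Re (2 * pi * herglotz_kernel (of_real (r1 * r2)) (cis (m2 - m1)))
      = 2 * pi * poisson_kernel (r1 * r2) (m2 - m1)"
    using Re_herglotz_kernel_cis[of "r1 * r2" "m2 - m1"] by simp
  with has_integral_Re[OF complex_integral] show ?thesis
    unfolding integrand by (simp only:)
qed

lemma wc_marginal_density:
  fixes rho1 rho2 mu theta :: real
  assumes "0 \<le> rho1" "rho1 < 1" and "0 \<le> rho2" "rho2 < 1"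
  shows "((\<lambda>nu. wc_density nu rho1 theta * wc_density mu rho2 nu)
    has_integral wc_density mu (rho1 * rho2) theta) {-pi..pi}"
proof -
  have "wc_density nu rho1 theta * wc_density mu rho2 nu
      = poisson_kernel rho1 (nu - theta) * poisson_kernel rho2 (nu - mu) / (2 * pi)^2" for nu
    using poisson_kernel_even[of rho1 "nu - theta"]
    by (simp add: wc_density_eq_poisson_kernel power2_eq_square)
  moreover have "wc_density mu (rho1 * rho2) theta
      = 2 * pi * poisson_kernel (rho1 * rho2) (mu - theta) / (2 * pi)^2"
    using poisson_kernel_even[of "rho1 * rho2" "mu - theta"]
    by (simp add: wc_density_eq_poisson_kernel power2_eq_square)
  ultimately show ?thesis
    using has_integral_divide[OF poisson_kernel_convolution[OF assms, of theta mu], of "(2 * pi)^2"]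
    by simp
qed

theorem theorem7:
  fixes rho1 rho2 mu1 mu2 nu :: real
  assumes "rho1 \<in> {0..<1}" and "rho2 \<in> {0..<1}"
    and "mu1 \<in> {-pi..<pi}" and "mu2 \<in> {-pi..<pi}"
    and "nu \<in> {-pi..<pi}"
  shows "posterior_density rho1 mu2 rho2 mu1 nu =
    ((1 - rho1\<^sup>2) * (1 - rho2\<^sup>2) * (1 + rho1\<^sup>2 * rho2\<^sup>2 - 2 * rho1 * rho2 * cos (mu1 - mu2))
       / (2 * pi * (1 - rho1\<^sup>2 * rho2\<^sup>2)))
    / ((1 + rho1\<^sup>2 - 2 * rho1 * cos (nu - mu1)) * (1 + rho2\<^sup>2 - 2 * rho2 * cos (nu - mu2)))"
proof -
  have r1: "0 \<le> rho1" "rho1 < 1" and r2: "0 \<le> rho2" "rho2 < 1" using assms(1,2) by auto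
  have r12: "0 \<le> rho1 * rho2" "rho1 * rho2 < 1"
    using r1 r2 mult_left_le[of rho2 rho1] by auto
  have marginal: "integral {-pi..pi} (\<lambda>nu'. wc_density nu' rho1 mu1 * wc_density mu2 rho2 nu')
      = wc_density mu2 (rho1 * rho2) mu1"
    by (rule integral_unique[OF wc_marginal_density[OF r1 r2]])
  have "posterior_density rho1 mu2 rho2 mu1 nu
      = poisson_kernel rho1 (nu - mu1) * poisson_kernel rho2 (nu - mu2)
        / (2 * pi * poisson_kernel (rho1 * rho2) (mu1 - mu2))"
    unfolding posterior_density_def marginal
    using poisson_kernel_even[of rho1 "nu - mu1"] poisson_kernel_even[of "rho1 * rho2" "mu1 - mu2"]
    by (simp add: wc_density_eq_poisson_kernel)
  moreover have "1 + rho1\<^sup>2 - 2 * rho1 * cos (nu - mu1) > 0" "1 + rho2\<^sup>2 - 2 * rho2 * cos (nu - mu2) > 0"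
    "1 + (rho1 * rho2)\<^sup>2 - 2 * (rho1 * rho2) * cos (mu1 - mu2) > 0"
    using poisson_kernel_denominator_pos r1 r2 r12 by auto
  moreover have "1 - (rho1 * rho2)\<^sup>2 > 0" using r12 by (simp add: abs_square_less_1)
  ultimately show ?thesis
    by (simp add: poisson_kernel_def power_mult_distrib mult_ac)
qed

end
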